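(* Let $X$ be a real Banach space with modulus of smoothness $\rho(u,X)\le\gamma u^q$ for all $u\ge0$, where $\gamma>0$ and $1<q\le2$; set $\mu(u):=\gamma u^q$ and $p:=\frac{q}{q-1}$. Let $t\in(0,1]$, $b\in(0,1]$, and $c:=(1-b)\left(\frac{b}{2\gamma}\right)^{\frac1{q-1}}$. Then for every $m\ge1$ and every $\alpha\in(0,1]$ with $\alpha\le \frac{t(1-b)}{1+t(1-b)}$, $$\gamma_m^{t,b,\mu}(\alpha,X)\le (1+mct^p)^{-\alpha/p},$$ and the same inequality holds for $\gamma_m^{t,b,\mu}(\alpha,X)^*$.
   Context: The modulus of smoothness is $\rho(u,X):=\sup_{\|x\|=\|y\|=1}\bigl(\tfrac12(\|x+uy\|+\|x-uy\|)-1\bigr)$. A (symmetric) dictionary is a set $\mathcal D\subset X$ of unit-norm elements with $\overline{\operatorname{span}}\,\mathcal D=X$ and $g\in\mathcal D\Rightarrow-g\in\mathcal D$. $A_1(\mathcal D)$ is the closed convex hull of $\mathcal D$, $\|f\|_{A_1(\mathcal D)}:=\inf\{M:f/M\in A_1(\mathcal D)\}$. For $f\ne0$, $F_f$ denotes a norming functional ($\|F_f\|=1$, $F_f(f)=\|f\|$; unique here since $X$ is uniformly smooth), and $r_{\mathcal D}(f):=\sup_{g\in\mathcal D}F_f(g)$. Dual Greedy Algorithm DGA$(t,b,\mu)$: $f_0:=f$, $G_0:=0$; if $f_{m-1}=0$ set $f_j=0$ for $j\ge m$ and stop; otherwise (1) take any $\varphi_m\in\mathcal D$ with $F_{f_{m-1}}(\varphi_m)\ge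 t\,r_{\mathcal D}(f_{m-1})$; (2) choose $c_m>0$ from $\|f_{m-1}\|\mu(c_m/\|f_{m-1}\|)=\frac{tb}{2}c_m r_{\mathcal D}(f_{m-1})$; (3) $f_m:=f_{m-1}-c_m\varphi_m$, $G_m^{t,b,\mu}:=G_{m-1}^{t,b,\mu}+c_m\varphi_m$. The modification DGA$(t,b,\mu)^*$ is identical except that in (2) $c_m>0$ solves $\|f_{m-1}\|\mu(c_m/\|f_{m-1}\|)=\frac b2 c_mF_{f_{m-1}}(\varphi_m)$. Define $$\gamma_m^{t,b,\mu}(\alpha,X):=\sup_{\mathcal D}\sup_f\sup_{G^{t,b,\mu}_m(f,\mathcal D)}\frac{\|f-G^{t,b,\mu}_m(f,\mathcal D)\|}{\|f\|^{1-\alpha}\|f\|_{A_1(\mathcal D)}^{\alpha}},$$ over all dictionaries, all $f\ne0$ with $\|f\|_{A_1(\mathcal D)}<\infty$, and all realizations of DGA$(t,b,\mu)$ after $m$ steps; $\gamma_m^{t,b,\mu}(\alpha,X)^*$ is the same quantity for DGA$(t,b,\mu)^*$. *)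

theory Defs
  imports "HOL-Analysis.Analysis" "HOL-Library.Extended_Real"
begin

definition modulus_of_smoothness :: "real \<Rightarrow> 'a::real_normed_vector itself \<Rightarrow> ereal" where
  "modulus_of_smoothness u (TYPE('a)) =
     (SUP (x,y) \<in> {(x::'a, y::'a). norm x = 1 \<and> norm y = 1}.
        ereal ((norm (x + u *\<^sub>R y) + norm (x - u *\<^sub>R y)) / 2 - 1))"

definition dictionary :: "'a::real_normed_vector set \<Rightarrow> bool" where
  "dictionary D \<longleftrightarrow> (\<forall>g\<in>D. norm g = 1) \<and> closure (span D) = UNIV \<and> (\<forall>g\<in>D. - g \<in> D)"

definition A1 :: "'a::real_normed_vector set \<Rightarrow> 'a set" where
  "A1 D = closure (convex hull D)"

definition A1norm :: "'a::real_normed_vector set \<Rightarrow> 'a \<Rightarrow> real" where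
  "A1norm D f = Inf {M. M > 0 \<and> (1 / M) *\<^sub>R f \<in> A1 D}"

definition A1_finite :: "'a::real_normed_vector set \<Rightarrow> 'a \<Rightarrow> bool" where
  "A1_finite D f \<longleftrightarrow> {M. M > 0 \<and> (1 / M) *\<^sub>R f \<in> A1 D} \<noteq> {}"

definition norming_functional :: "'a::real_normed_vector \<Rightarrow> ('a \<Rightarrow> real) \<Rightarrow> bool" where
  "norming_functional f F \<longleftrightarrow> bounded_linear F \<and> onorm F = 1 \<and> F f = norm f"

definition r_D :: "'a::real_normed_vector set \<Rightarrow> ('a \<Rightarrow> real) \<Rightarrow> real" where
  "r_D D F = (SUP g\<in>D. F g)"

text \<open>One step of DGA(t,b,mu) (star = False) or DGA(t,b,mu)* (star = True),
  passing from residual f to residual f'.\<close>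
definition dga_step :: "bool \<Rightarrow> real \<Rightarrow> real \<Rightarrow> (real \<Rightarrow> real) \<Rightarrow> 'a::real_normed_vector set
    \<Rightarrow> 'a \<Rightarrow> 'a \<Rightarrow> bool" where
  "dga_step star t b \<mu> D f f' \<longleftrightarrow>
     (if f = 0 then f' = 0 else
      (\<exists>F \<phi> c. norming_functional f F \<and> \<phi> \<in> D \<and> F \<phi> \<ge> t * r_D D F \<and> c > 0 \<and>
         (if star then norm f * \<mu> (c / norm f) = b / 2 * c * F \<phi>
          else norm f * \<mu> (c / norm f) = t * b / 2 * c * r_D D F) \<and>
         f' = f - c *\<^sub>R \<phi>))"

text \<open>G is a possible m-th approximant G_m of f produced by the algorithm
  (G_m = c_1 phi_1 + ... + c_m phi_m = f - f_m).\<close>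
definition dga_approx :: "bool \<Rightarrow> real \<Rightarrow> real \<Rightarrow> (real \<Rightarrow> real) \<Rightarrow> 'a::real_normed_vector set
    \<Rightarrow> 'a \<Rightarrow> nat \<Rightarrow> 'a \<Rightarrow> bool" where
  "dga_approx star t b \<mu> D f m G \<longleftrightarrow>
     (\<exists>fs. fs 0 = f \<and> (\<forall>i<m. dga_step star t b \<mu> D (fs i) (fs (Suc i))) \<and> G = f - fs m)"

definition dga_gamma :: "bool \<Rightarrow> real \<Rightarrow> real \<Rightarrow> (real \<Rightarrow> real) \<Rightarrow> real \<Rightarrow> nat
    \<Rightarrow> 'a::real_normed_vector itself \<Rightarrow> ereal" where
  "dga_gamma star t b \<mu> \<alpha> m (TYPE('a)) =
     (SUP (D,f,G) \<in> {(D::'a set, f, G). dictionary D \<and> f \<noteq> 0 \<and> A1_finite D f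
                      \<and> dga_approx star t b \<mu> D f m G}.
        ereal (norm (f - G) / (norm f powr (1 - \<alpha>) * A1norm D f powr \<alpha>)))"

end

theory Submission
  imports Defs
begin

(* Write f_n for the residuals (f_0 = f), a_n = ||f_n||, c_n = ||f_n - f_(n+1)|| and
   r_n = r_D(f_n).  Since the dictionary is symmetric, testing the norming functional of f_n
   against f = f_n + sum_(j<n) (f_j - f_(j+1)) gives the budget bound a_n <= r_n B_n with
   B_n = ||f||_A1 + sum_(j<n) c_j.  The smoothness bound turns a step into the decrease
   a_(n+1) <= a_n - t(1-b) c_n r_n, and the step size equation forces
   c_n >= a_n (t b r_n / (2 gamma))^(1/(q-1)).  With the budget bound this yields two
   recursions, a_(n+1) <= a_n (1 - kappa c_n / B_n) and a_(n+1) <= a_n (1 - C (a_n / B_n)^p),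
   where kappa = t(1-b) and C = c t^p with c the constant of the statement.  Their invariants
   are that a_n B_n^kappa does not increase and that (B_n / a_n)^p grows by at least C per
   step; interpolating between them gives the exponent alpha <= kappa/(1+kappa). *)

section \<open>Real inequalities behind the residual recursions\<close>

lemma one_plus_powr_le:
  fixes x k :: real
  assumes "0 \<le> x" "0 \<le> k" "k \<le> 1"
  shows "(1 + x) powr k \<le> 1 + k * x"
  using Youngs_inequality_0[of k "1 - k" "1 + x" 1] assms by (simp add: algebra_simps)

lemma weighted_residual_step:
  fixes a a' B c \<kappa> :: real
  assumes "0 \<le> a" "0 \<le> a'" "0 < B" "0 \<le> c" "0 \<le> \<kappa>" "\<kappa> \<le> 1"
    and step: "a' \<le> a * (1 - \<kappa> * c / B)"
  shows "a' * (B + c) powr \<kappa> \<le> a * B powr \<kappa>"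
proof -
  define x where "x = c / B"
  have x: "0 \<le> x" "B + c = B * (1 + x)"
    using assms by (auto simp: x_def field_simps)
  have "0 \<le> a' * B powr \<kappa>"
    using assms by simp
  then have "a' * (B + c) powr \<kappa> \<le> a' * (B powr \<kappa> * (1 + \<kappa> * x))"
    using x assms one_plus_powr_le[of x \<kappa>] by (simp add: powr_mult mult_left_mono)
  also have "\<dots> \<le> a * (1 - \<kappa> * x) * (B powr \<kappa> * (1 + \<kappa> * x))"
    using step assms x by (intro mult_right_mono) (auto simp: x_def)
  also have "\<dots> = a * B powr \<kappa> * (1 - (\<kappa> * x)\<^sup>2)"
    by (simp add: algebra_simps power2_eq_square)
  also have "\<dots> \<le> a * B powr \<kappa>"
    using assms by (simp add: mult_left_le)
  finally show ?thesis .
qed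

lemma ratio_residual_step:
  fixes a a' B B' C K p :: real
  assumes "0 \<le> a" "0 \<le> a'" "0 < B" "B \<le> B'" "0 \<le> C" "1 \<le> p" "0 \<le> K"
    and step: "a' \<le> a * (1 - C * (a / B) powr p)"
    and inv: "(a / B) powr p * K \<le> 1"
  shows "(a' / B') powr p * (K + C) \<le> 1"
proof (cases "a' = 0")
  case False
  define u where "u = (a / B) powr p"
  have "0 < a * (1 - C * u)"
    using False assms by (simp add: u_def)
  then have Cu: "0 < 1 - C * u" "C * u \<le> 1" "0 \<le> C * u"
    using assms by (auto simp: u_def zero_less_mult_iff)
  have "a' / B' \<le> a' / B"
    using assms by (intro frac_le) auto
  also have "\<dots> \<le> (a / B) * (1 - C * u)"
    using step \<open>0 < B\<close> by (simp add: u_def divide_right_mono)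
  finally have "(a' / B') powr p \<le> ((a / B) * (1 - C * u)) powr p"
    using assms by (intro powr_mono2) auto
  also have "\<dots> = u * (1 - C * u) powr p"
    using assms Cu by (subst powr_mult) (auto simp: u_def)
  also have "\<dots> \<le> u * (1 - C * u)"
    using Cu assms powr_le_one_le[of "1 - C * u" p] by (simp add: u_def mult_left_mono)
  finally have "(a' / B') powr p * (K + C) \<le> u * (1 - C * u) * (K + C)"
    using assms by (simp add: mult_right_mono)
  also have "\<dots> = 1 - ((1 - u * K) * (1 - C * u) + (C * u)\<^sup>2)"
    by (simp add: algebra_simps power2_eq_square)
  also have "\<dots> \<le> 1"
  proof -
    have "0 \<le> (1 - u * K) * (1 - C * u)"
      using inv Cu by (simp add: u_def)
    then show ?thesis
      using zero_le_power2[of "C * u"] by linarith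
  qed
  finally show ?thesis .
qed simp

lemma residual_recursion_invariants:
  fixes a c B :: "nat \<Rightarrow> real" and A \<kappa> C p :: real and m n :: nat
  assumes "0 \<le> \<kappa>" "\<kappa> \<le> 1" "0 \<le> C" "1 \<le> p" "0 < a 0" "a 0 \<le> A"
    and "\<And>n. 0 \<le> a n" and c_nonneg: "\<And>n. n < m \<Longrightarrow> 0 \<le> c n"
    and B0: "B 0 = A" and B_Suc: "\<And>n. B (Suc n) = B n + c n"
    and decay_linear: "\<And>n. n < m \<Longrightarrow> a (Suc n) \<le> a n * (1 - \<kappa> * c n / B n)"
    and decay_power: "\<And>n. n < m \<Longrightarrow> a (Suc n) \<le> a n * (1 - C * (a n / B n) powr p)"
    and "n \<le> m"
  shows "A \<le> B n \<and> a n * B n powr \<kappa> \<le> a 0 * A powr \<kappa>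
    \<and> (a n / B n) powr p * ((A / a 0) powr p + n * C) \<le> 1"
  using \<open>n \<le> m\<close>
proof (induction n)
  case 0
  have "(a 0 / A) powr p * (A / a 0) powr p = 1"
    using assms by (simp add: powr_mult[symmetric])
  then show ?case
    using B0 by simp
next
  case (Suc n)
  then have n: "n < m" and IH: "A \<le> B n" "a n * B n powr \<kappa> \<le> a 0 * A powr \<kappa>"
    "(a n / B n) powr p * ((A / a 0) powr p + n * C) \<le> 1"
    by auto
  have "0 < B n"
    using IH assms by linarith
  have "A \<le> B (Suc n)"
    using IH c_nonneg[OF n] by (simp add: B_Suc)
  moreover have "a (Suc n) * B (Suc n) powr \<kappa> \<le> a 0 * A powr \<kappa>"
    using weighted_residual_step[of "a n" "a (Suc n)" "B n" "c n" \<kappa>] assms n \<open>0 < B n\<close> IH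
    by (simp add: B_Suc)
  moreover have "(a (Suc n) / B (Suc n)) powr p * ((A / a 0) powr p + Suc n * C) \<le> 1"
    using ratio_residual_step[of "a n" "a (Suc n)" "B n" "B (Suc n)" C p "(A / a 0) powr p + n * C"]
      assms n \<open>0 < B n\<close> IH by (simp add: B_Suc algebra_simps)
  ultimately show ?case
    by blast
qed

lemma le_powr_of_powr_mult_le_one:
  fixes y K L p :: real
  assumes "0 \<le> y" "1 \<le> K" "0 \<le> L" "0 < p" "y powr p * (K + L) \<le> 1"
  shows "y \<le> (1 + L) powr (- 1 / p)"
proof -
  have "y powr p * (1 + L) \<le> y powr p * (K + L)"
    using assms by (intro mult_left_mono) auto
  then have "y powr p \<le> (1 + L) powr (- 1)"
    using assms by (simp add: powr_minus_divide field_simps)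
  then have "(y powr p) powr (1 / p) \<le> ((1 + L) powr (- 1)) powr (1 / p)"
    using assms by (intro powr_mono2) auto
  moreover have "((1 + L) powr (- 1)) powr (1 / p) = (1 + L) powr (- 1 / p)"
    by (subst powr_powr) simp
  ultimately show ?thesis
    using assms by (simp add: powr_powr)
qed

lemma le_powr_smaller_exponent:
  fixes x W \<alpha> \<beta> :: real
  assumes "0 < \<alpha>" "\<alpha> \<le> \<beta>" "0 < W" "x \<le> 1" "x \<le> W powr \<beta>"
  shows "x \<le> W powr \<alpha>"
proof (cases "1 \<le> W")
  case True
  then show ?thesis
    using assms ge_one_powr_ge_zero[of W \<alpha>] by linarith
next
  case False
  then show ?thesis
    using assms powr_mono'[of \<alpha> \<beta> W] by linarith
qed

lemma powr_weighted_le: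
  fixes a a0 A B \<kappa> :: real
  assumes "0 < a" "0 < a0" "0 < A" "0 < B" "0 < \<kappa>"
    and weighted: "a * B powr \<kappa> \<le> a0 * A powr \<kappa>"
  shows "(a / a0) powr ((1 + \<kappa>) / \<kappa>) \<le> (A / a0) * (a / B)"
proof -
  have "(a * B powr \<kappa>) powr (1 / \<kappa>) \<le> (a0 * A powr \<kappa>) powr (1 / \<kappa>)"
    using weighted assms by (intro powr_mono2) auto
  then have "a powr (1 / \<kappa>) * B \<le> a0 powr (1 / \<kappa>) * A"
    using assms by (simp add: powr_mult powr_powr)
  then have "a powr (1 / \<kappa>) * B * (a / B) \<le> a0 powr (1 / \<kappa>) * A * (a / B)"
    using assms by (intro mult_right_mono) auto
  then have "a powr (1 / \<kappa>) * a \<le> a0 powr (1 / \<kappa>) * A * (a / B)"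
    using \<open>0 < B\<close> by simp
  then have "(a powr (1 / \<kappa>) * a) / (a0 powr (1 / \<kappa>) * a0)
      \<le> (a0 powr (1 / \<kappa>) * A * (a / B)) / (a0 powr (1 / \<kappa>) * a0)"
    using assms by (intro divide_right_mono) auto
  moreover have "(a / a0) powr ((1 + \<kappa>) / \<kappa>) = (a powr (1 / \<kappa>) * a) / (a0 powr (1 / \<kappa>) * a0)"
    using assms by (simp add: add_divide_distrib powr_add powr_divide)
  ultimately show ?thesis
    using assms by (simp add: mult.commute)
qed

lemma residual_interpolation:
  fixes a a0 A B \<kappa> L p \<alpha> :: real
  assumes "0 \<le> a" "0 < a0" "a0 \<le> A" "A \<le> B" "0 \<le> \<kappa>" "0 \<le> L" "1 \<le> p"
    and alpha: "0 < \<alpha>" "\<alpha> \<le> \<kappa> / (1 + \<kappa>)"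
    and weighted: "a * B powr \<kappa> \<le> a0 * A powr \<kappa>"
    and ratio: "(a / B) powr p * ((A / a0) powr p + L) \<le> 1"
  shows "a \<le> a0 powr (1 - \<alpha>) * A powr \<alpha> * (1 + L) powr (- \<alpha> / p)"
proof -
  define W where "W = (A / a0) * (1 + L) powr (- 1 / p)"
  define x where "x = a / a0"
  have "0 < A" "0 < B" "0 < W"
    using assms by (auto simp: W_def)
  have "0 < \<kappa>"
    using alpha \<open>0 \<le> \<kappa>\<close> by (cases "\<kappa> = 0") auto
  have rhs: "a0 powr (1 - \<alpha>) * A powr \<alpha> * (1 + L) powr (- \<alpha> / p) = a0 * W powr \<alpha>"
    using assms \<open>0 < A\<close>
    by (simp add: W_def powr_mult powr_divide powr_powr powr_diff field_simps)
  have "x \<le> 1"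
  proof -
    have "a * A powr \<kappa> \<le> a * B powr \<kappa>"
      using assms \<open>0 < A\<close> by (intro mult_left_mono powr_mono2) auto
    then have "a * A powr \<kappa> \<le> a0 * A powr \<kappa>"
      using weighted by linarith
    then show ?thesis
      using assms \<open>0 < A\<close> by (simp add: x_def)
  qed
  have "x \<le> W powr (\<kappa> / (1 + \<kappa>))"
  proof (cases "a = 0")
    case False
    define y where "y = a / B"
    have "0 < a" "0 < y"
      using False assms \<open>0 < B\<close> by (auto simp: y_def)
    have "1 \<le> (A / a0) powr p"
      using assms by (simp add: ge_one_powr_ge_zero)
    then have y_le: "y \<le> (1 + L) powr (- 1 / p)"
      using ratio assms \<open>0 < y\<close> unfolding y_def by (intro le_powr_of_powr_mult_le_one) auto
    have "x powr ((1 + \<kappa>) / \<kappa>) \<le> (A / a0) * y"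
      using powr_weighted_le[OF \<open>0 < a\<close> \<open>0 < a0\<close> \<open>0 < A\<close> \<open>0 < B\<close> \<open>0 < \<kappa>\<close> weighted]
      by (simp add: x_def y_def)
    also have "\<dots> \<le> W"
      unfolding W_def using y_le assms by (intro mult_left_mono) auto
    finally have "(x powr ((1 + \<kappa>) / \<kappa>)) powr (\<kappa> / (1 + \<kappa>)) \<le> W powr (\<kappa> / (1 + \<kappa>))"
      using assms by (intro powr_mono2) auto
    then show ?thesis
      using assms \<open>0 < a\<close> \<open>0 < \<kappa>\<close> by (simp add: x_def powr_powr)
  qed (use \<open>0 < W\<close> in \<open>simp add: x_def\<close>)
  then have "x \<le> W powr \<alpha>"
    by (rule le_powr_smaller_exponent[OF alpha \<open>0 < W\<close> \<open>x \<le> 1\<close>])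
  then show ?thesis
    using rhs assms by (simp add: x_def field_simps)
qed

lemma step_size_lower_bound:
  fixes N c \<gamma> q b s v :: real
  assumes "0 < N" "0 < c" "0 < \<gamma>" "1 < q" "0 < b" "0 \<le> v" "v \<le> s"
    and step: "N * (\<gamma> * (c / N) powr q) = b / 2 * c * s"
  shows "N * (b * v / (2 * \<gamma>)) powr (1 / (q - 1)) \<le> c"
proof -
  define u where "u = c / N"
  have "0 < u" "c = N * u"
    using assms by (auto simp: u_def)
  have "N * u * (\<gamma> * u powr (q - 1)) = N * (\<gamma> * u powr q)"
    using \<open>0 < u\<close> powr_add[of u 1 "q - 1"] by simp
  also have "\<dots> = b / 2 * c * s"
    using step by (simp add: u_def)
  also have "\<dots> = N * u * (b * s / 2)"
    using \<open>c = N * u\<close> by simp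
  finally have "\<gamma> * u powr (q - 1) = b * s / 2"
    using \<open>0 < N\<close> \<open>0 < u\<close> by simp
  then have "u powr (q - 1) = b * s / (2 * \<gamma>)"
    using \<open>0 < \<gamma>\<close> by (simp add: field_simps)
  moreover have "b * v / (2 * \<gamma>) \<le> b * s / (2 * \<gamma>)"
    using assms by (intro divide_right_mono mult_left_mono) auto
  ultimately have "b * v / (2 * \<gamma>) \<le> u powr (q - 1)"
    by simp
  then have "(b * v / (2 * \<gamma>)) powr (1 / (q - 1)) \<le> (u powr (q - 1)) powr (1 / (q - 1))"
    using assms by (intro powr_mono2) auto
  also have "\<dots> = u"
    using assms \<open>0 < u\<close> by (simp add: powr_powr)
  finally show ?thesis
    using \<open>0 < N\<close> \<open>c = N * u\<close> by simp
qed

lemma step_size_powr_identity: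
  fixes t b \<gamma> r q :: real
  assumes "0 < t" "0 \<le> b" "0 < \<gamma>" "0 < r" "1 < q"
  shows "t * (1 - b) * (b * (t * r) / (2 * \<gamma>)) powr (1 / (q - 1)) * r
    = (1 - b) * (b / (2 * \<gamma>)) powr (1 / (q - 1)) * t powr (q / (q - 1)) * r powr (q / (q - 1))"
proof -
  define e where "e = 1 / (q - 1)"
  have "q / (q - 1) = 1 + e"
    using assms by (simp add: e_def field_simps)
  have "(b * (t * r) / (2 * \<gamma>)) powr e = (b / (2 * \<gamma>)) powr e * t powr e * r powr e"
    using assms by (simp add: powr_mult[symmetric] mult_ac)
  then have "t * (1 - b) * (b * (t * r) / (2 * \<gamma>)) powr e * r
      = (1 - b) * (b / (2 * \<gamma>)) powr e * (t * t powr e) * (r powr e * r)"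
    by (simp add: mult_ac)
  also have "\<dots> = (1 - b) * (b / (2 * \<gamma>)) powr e * t powr (1 + e) * r powr (1 + e)"
    using assms by (simp add: powr_add mult_ac)
  finally show ?thesis
    unfolding \<open>q / (q - 1) = 1 + e\<close> e_def .
qed

section \<open>Norming functionals, smoothness and the A1 norm\<close>

lemma norming_functionalD:
  assumes "norming_functional f F"
  shows "bounded_linear F" "F f = norm f" "F x \<le> norm x"
proof -
  show "bounded_linear F" "F f = norm f"
    using assms by (auto simp: norming_functional_def)
  have "\<bar>F x\<bar> \<le> onorm F * norm x"
    using onorm[OF \<open>bounded_linear F\<close>] by simp
  then show "F x \<le> norm x"
    using assms by (simp add: norming_functional_def)
qed

lemma modulus_of_smoothness_ge:
  fixes x y :: "'a::real_normed_vector"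
  assumes "norm x = 1" "norm y = 1"
  shows "ereal ((norm (x + u *\<^sub>R y) + norm (x - u *\<^sub>R y)) / 2 - 1) \<le> modulus_of_smoothness u TYPE('a)"
  unfolding modulus_of_smoothness_def by (rule SUP_upper2[of "(x, y)"]) (use assms in auto)

lemma norm_diff_le_smoothness:
  fixes f \<phi> :: "'a::real_normed_vector"
  assumes smooth: "\<forall>u\<ge>0. modulus_of_smoothness u TYPE('a) \<le> ereal (\<mu> u)"
    and "f \<noteq> 0" "norming_functional f F" "norm \<phi> = 1" "0 \<le> c"
  shows "norm (f - c *\<^sub>R \<phi>) \<le> norm f + 2 * norm f * \<mu> (c / norm f) - c * F \<phi>"
proof -
  define x where "x = (1 / norm f) *\<^sub>R f"
  define u where "u = c / norm f"
  have "0 < norm f" "norm x = 1" "0 \<le> u"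
    using assms by (auto simp: x_def u_def)
  have "ereal ((norm (x + u *\<^sub>R \<phi>) + norm (x - u *\<^sub>R \<phi>)) / 2 - 1) \<le> ereal (\<mu> u)"
    using modulus_of_smoothness_ge[OF \<open>norm x = 1\<close> \<open>norm \<phi> = 1\<close>] smooth \<open>0 \<le> u\<close>
    by (meson order.trans)
  then have "norm (x + u *\<^sub>R \<phi>) + norm (x - u *\<^sub>R \<phi>) \<le> 2 + 2 * \<mu> u"
    by (simp add: field_simps)
  moreover have "f + c *\<^sub>R \<phi> = norm f *\<^sub>R (x + u *\<^sub>R \<phi>)" "f - c *\<^sub>R \<phi> = norm f *\<^sub>R (x - u *\<^sub>R \<phi>)"
    using \<open>0 < norm f\<close> by (auto simp: x_def u_def algebra_simps)
  ultimately have "norm (f + c *\<^sub>R \<phi>) + norm (f - c *\<^sub>R \<phi>) \<le> norm f * (2 + 2 * \<mu> u)"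
    using \<open>0 < norm f\<close> by (simp add: distrib_left[symmetric])
  moreover have "norm f + c * F \<phi> = F (f + c *\<^sub>R \<phi>)"
    using norming_functionalD[OF \<open>norming_functional f F\<close>]
    by (simp add: linear_add linear_scale bounded_linear.linear)
  moreover have "F (f + c *\<^sub>R \<phi>) \<le> norm (f + c *\<^sub>R \<phi>)"
    by (rule norming_functionalD(3)[OF \<open>norming_functional f F\<close>])
  ultimately show ?thesis
    by (simp add: u_def algebra_simps)
qed

lemma dictionary_nonempty:
  fixes D :: "'a::real_normed_vector set" and x :: 'a
  assumes "dictionary D" "x \<noteq> 0"
  shows "D \<noteq> {}"
proof
  assume "D = {}"
  then have "{0} = (UNIV :: 'a set)"
    using assms(1) by (simp add: dictionary_def)
  then show False
    using assms(2) by (metis UNIV_I singletonD)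
qed

lemma dictionary_functional_le_one:
  assumes "norming_functional f F" "dictionary D" "g \<in> D"
  shows "F g \<le> 1"
  using norming_functionalD(3)[OF assms(1), of g] assms(2,3) by (simp add: dictionary_def)

lemma r_D_upper:
  assumes "norming_functional f F" "dictionary D" "g \<in> D"
  shows "F g \<le> r_D D F"
proof -
  have "bdd_above (F ` D)"
    using dictionary_functional_le_one[OF assms(1,2)] by (intro bdd_aboveI2[where M = 1])
  then show ?thesis
    unfolding r_D_def using assms by (intro cSUP_upper)
qed

lemma r_D_nonneg:
  assumes "norming_functional f F" "dictionary D" "D \<noteq> {}"
  shows "0 \<le> r_D D F"
proof -
  obtain g where "g \<in> D" "- g \<in> D"
    using assms(2,3) by (auto simp: dictionary_def)
  moreover have "F (- g) = - F g"
    using norming_functionalD(1)[OF assms(1)] by (simp add: linear_neg bounded_linear.linear)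
  ultimately show ?thesis
    using r_D_upper[OF assms(1,2), of g] r_D_upper[OF assms(1,2), of "- g"] by linarith
qed

lemma functional_le_A1norm:
  assumes "bounded_linear F" "\<forall>g\<in>D. F g \<le> r" "0 \<le> r" "A1_finite D f"
  shows "F f \<le> r * A1norm D f"
proof -
  define S where "S = {M. M > 0 \<and> (1 / M) *\<^sub>R f \<in> A1 D}"
  have "A1 D \<subseteq> {h. F h \<le> r}"
    unfolding A1_def
  proof (intro closure_minimal hull_minimal)
    show "convex {h. F h \<le> r}"
      using assms(1) unfolding convex_def
      by (auto simp: linear_add linear_scale bounded_linear.linear intro!: convex_bound_le)
    show "closed {h. F h \<le> r}"
      using assms(1) by (intro closed_Collect_le continuous_on_const linear_continuous_on)
  qed (use assms in auto)
  then have SM: "F f \<le> r * M" if "M \<in> S" for M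
    using that assms(1) by (auto simp: S_def linear_scale bounded_linear.linear field_simps)
  have "S \<noteq> {}"
    using assms by (simp add: A1_finite_def S_def)
  show ?thesis
  proof (cases "r = 0")
    case True
    then show ?thesis
      using SM \<open>S \<noteq> {}\<close> by auto
  next
    case False
    then have "F f / r \<le> Inf S"
      using \<open>S \<noteq> {}\<close> SM assms by (intro cInf_greatest) (auto simp: field_simps)
    then show ?thesis
      using False assms by (simp add: A1norm_def S_def[symmetric] field_simps)
  qed
qed

lemma norm_le_A1norm:
  assumes "dictionary D" "A1_finite D f"
  shows "norm f \<le> A1norm D f"
proof -
  have "A1 D \<subseteq> cball 0 1"
    unfolding A1_def using assms(1)
    by (intro closure_minimal hull_minimal) (auto simp: dictionary_def)
  then have "norm f \<le> M" if "M > 0" "(1 / M) *\<^sub>R f \<in> A1 D" for M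
    using that by (auto simp: field_simps)
  then show ?thesis
    using assms(2) unfolding A1norm_def A1_finite_def by (intro cInf_greatest) auto
qed

section \<open>Steps of the dual greedy algorithm\<close>

lemma dga_step_zero: "dga_step star t b \<mu> D 0 f' \<Longrightarrow> f' = 0"
  by (simp add: dga_step_def)

text \<open>The witness \<open>s\<close> is \<open>F \<phi>\<close> for the starred variant and \<open>t * r_D D F\<close> for the plain one;
  it lets both variants be treated at once.\<close>

lemma dga_step_nonzeroE:
  assumes "dga_step star t b \<mu> D f f'" "f \<noteq> 0"
  obtains F \<phi> c s where "norming_functional f F" "\<phi> \<in> D" "0 < c" "f' = f - c *\<^sub>R \<phi>"
    "t * r_D D F \<le> s" "s \<le> F \<phi>" "norm f * \<mu> (c / norm f) = b / 2 * c * s"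
proof -
  obtain F \<phi> c where step: "norming_functional f F" "\<phi> \<in> D" "0 < c" "f' = f - c *\<^sub>R \<phi>"
    and "t * r_D D F \<le> F \<phi>"
    and eq: "if star then norm f * \<mu> (c / norm f) = b / 2 * c * F \<phi>
      else norm f * \<mu> (c / norm f) = t * b / 2 * c * r_D D F"
    using assms unfolding dga_step_def by auto
  show thesis
  proof (cases star)
    case True
    then show thesis
      using that[OF step, of "F \<phi>"] \<open>t * r_D D F \<le> F \<phi>\<close> eq by simp
  next
    case False
    then show thesis
      using that[OF step, of "t * r_D D F"] \<open>t * r_D D F \<le> F \<phi>\<close> eq by (simp add: mult.assoc)
  qed
qed

lemma dga_step_functional_increment:
  assumes "dga_step star t b \<mu> D f f'" "dictionary D" "linear F" "\<forall>g\<in>D. F g \<le> r"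
  shows "F f' \<le> F f + r * norm (f - f')"
proof (cases "f = 0")
  case True
  then have "f' = 0"
    using assms(1) dga_step_zero by blast
  then show ?thesis
    using True assms(3) by (simp add: linear_0)
next
  case False
  then obtain \<phi> c where "\<phi> \<in> D" "0 < c" "f' = f - c *\<^sub>R \<phi>"
    using assms(1) by (elim dga_step_nonzeroE)
  moreover have "- \<phi> \<in> D" "norm \<phi> = 1"
    using assms(2) \<open>\<phi> \<in> D\<close> by (auto simp: dictionary_def)
  ultimately have "c * F (- \<phi>) \<le> c * r" and norm_step: "norm (f - f') = c"
    using assms(4) \<open>0 < c\<close> by auto
  then have "- (c * F \<phi>) \<le> c * r"
    using assms(3) by (simp add: linear_neg)
  moreover have "F f' = F f - c * F \<phi>"
    using \<open>f' = f - c *\<^sub>R \<phi>\<close> assms(3) by (simp add: linear_diff linear_scale)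
  ultimately show ?thesis
    using norm_step by (simp add: mult.commute)
qed

lemma dga_power_step:
  fixes f f' :: "'a::real_normed_vector"
  assumes smooth: "\<forall>u\<ge>0. modulus_of_smoothness u TYPE('a) \<le> ereal (\<gamma> * u powr q)"
    and "0 < \<gamma>" "1 < q" "0 < t" "0 < b" "b \<le> 1" "dictionary D"
    and step: "dga_step star t b (\<lambda>u. \<gamma> * u powr q) D f f'" and "f \<noteq> 0"
  obtains F where "norming_functional f F"
    "norm f' \<le> norm f - t * (1 - b) * norm (f - f') * r_D D F"
    "norm f * (b * (t * r_D D F) / (2 * \<gamma>)) powr (1 / (q - 1)) \<le> norm (f - f')"
proof -
  obtain F \<phi> c s where F: "norming_functional f F" and "\<phi> \<in> D" "0 < c" "f' = f - c *\<^sub>R \<phi>"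
    and s: "t * r_D D F \<le> s" "s \<le> F \<phi>"
    and eq: "norm f * (\<gamma> * (c / norm f) powr q) = b / 2 * c * s"
    using step \<open>f \<noteq> 0\<close> by (elim dga_step_nonzeroE)
  have "0 \<le> r_D D F"
    using r_D_nonneg[OF F \<open>dictionary D\<close>] \<open>\<phi> \<in> D\<close> by blast
  have "norm \<phi> = 1"
    using \<open>dictionary D\<close> \<open>\<phi> \<in> D\<close> by (simp add: dictionary_def)
  then have norm_step: "norm (f - f') = c"
    using \<open>f' = f - c *\<^sub>R \<phi>\<close> \<open>0 < c\<close> by simp
  have "norm f' \<le> norm f + 2 * (norm f * (\<gamma> * (c / norm f) powr q)) - c * F \<phi>"
    using norm_diff_le_smoothness[OF smooth \<open>f \<noteq> 0\<close> F \<open>norm \<phi> = 1\<close>] \<open>0 < c\<close> \<open>f' = f - c *\<^sub>R \<phi>\<close>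
    by (simp add: mult.assoc)
  also have "\<dots> = norm f - (1 - b) * c * s - c * (F \<phi> - s)"
    unfolding eq by (simp add: algebra_simps)
  also have "\<dots> \<le> norm f - (1 - b) * c * (t * r_D D F)"
  proof -
    have "(1 - b) * c * (t * r_D D F) \<le> (1 - b) * c * s"
      using s assms \<open>0 < c\<close> by (intro mult_left_mono) auto
    moreover have "0 \<le> c * (F \<phi> - s)"
      using s \<open>0 < c\<close> by simp
    ultimately show ?thesis
      by linarith
  qed
  finally have "norm f' \<le> norm f - t * (1 - b) * norm (f - f') * r_D D F"
    by (simp add: norm_step algebra_simps)
  moreover have "norm f * (b * (t * r_D D F) / (2 * \<gamma>)) powr (1 / (q - 1)) \<le> norm (f - f')"
    using step_size_lower_bound[OF _ \<open>0 < c\<close> \<open>0 < \<gamma>\<close> \<open>1 < q\<close> \<open>0 < b\<close> _ s(1) eq]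
      \<open>f \<noteq> 0\<close> \<open>0 < t\<close> \<open>0 \<le> r_D D F\<close> norm_step by simp
  ultimately show thesis
    using that F by blast
qed

lemma dga_power_step_decay:
  fixes f f' :: "'a::real_normed_vector"
  assumes smooth: "\<forall>u\<ge>0. modulus_of_smoothness u TYPE('a) \<le> ereal (\<gamma> * u powr q)"
    and "0 < \<gamma>" "1 < q" "0 < t" "0 < b" "b \<le> 1" "dictionary D"
    and step: "dga_step star t b (\<lambda>u. \<gamma> * u powr q) D f f'"
    and "0 < B" and budget: "\<And>F. norming_functional f F \<Longrightarrow> norm f \<le> r_D D F * B"
  shows "norm f' \<le> norm f * (1 - t * (1 - b) * norm (f - f') / B) \<and>
    norm f' \<le> norm f * (1 - (1 - b) * (b / (2 * \<gamma>)) powr (1 / (q - 1)) * t powr (q / (q - 1))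
                           * (norm f / B) powr (q / (q - 1)))"
proof (cases "f = 0")
  case True
  then show ?thesis
    using step dga_step_zero by simp
next
  case False
  define \<kappa> p C where "\<kappa> = t * (1 - b)" and "p = q / (q - 1)"
    and "C = (1 - b) * (b / (2 * \<gamma>)) powr (1 / (q - 1)) * t powr p"
  have "1 \<le> p" "0 \<le> \<kappa>" "0 \<le> C"
    using assms by (auto simp: p_def \<kappa>_def C_def)
  obtain F where "norming_functional f F"
    and decrease: "norm f' \<le> norm f - \<kappa> * norm (f - f') * r_D D F"
    and step_size: "norm f * (b * (t * r_D D F) / (2 * \<gamma>)) powr (1 / (q - 1)) \<le> norm (f - f')"
    using dga_power_step[OF assms(1-7) step False] unfolding \<kappa>_def by blast
  define r where "r = r_D D F"
  have "norm f \<le> r * B"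
    using budget[OF \<open>norming_functional f F\<close>] by (simp add: r_def)
  moreover have "0 < norm f"
    using False by simp
  ultimately have "norm f / B \<le> r" "0 < r * B"
    using \<open>0 < B\<close> by (simp add: pos_divide_le_eq, linarith)
  then have "0 < r"
    using \<open>0 < B\<close> by (simp add: zero_less_mult_iff)
  have "\<kappa> * norm (f - f') * (norm f / B) \<le> \<kappa> * norm (f - f') * r"
    using \<open>norm f / B \<le> r\<close> \<open>0 \<le> \<kappa>\<close> by (intro mult_left_mono) auto
  then have linear: "norm f' \<le> norm f * (1 - \<kappa> * norm (f - f') / B)"
    using decrease by (simp add: r_def algebra_simps)
  have identity: "\<kappa> * (b * (t * r) / (2 * \<gamma>)) powr (1 / (q - 1)) * r = C * r powr p"
    unfolding \<kappa>_def C_def p_def using assms \<open>0 < r\<close> by (intro step_size_powr_identity) auto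
  have "norm f * (C * (norm f / B) powr p) \<le> norm f * (C * r powr p)"
    using \<open>norm f / B \<le> r\<close> \<open>0 < B\<close> \<open>1 \<le> p\<close> \<open>0 \<le> C\<close> by (intro mult_left_mono powr_mono2) auto
  also have "\<dots> = \<kappa> * (norm f * (b * (t * r) / (2 * \<gamma>)) powr (1 / (q - 1))) * r"
    by (simp add: identity[symmetric] mult_ac)
  also have "\<dots> \<le> \<kappa> * norm (f - f') * r"
    using step_size \<open>0 \<le> \<kappa>\<close> \<open>0 < r\<close> by (simp add: r_def mult_left_mono mult_right_mono)
  finally have "norm f' \<le> norm f * (1 - C * (norm f / B) powr p)"
    using decrease by (simp add: r_def algebra_simps)
  with linear show ?thesis
    by (simp add: \<kappa>_def C_def p_def)
qed

lemma dga_residual_functional_le: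
  assumes "dictionary D" "bounded_linear F" "\<forall>g\<in>D. F g \<le> r" "0 \<le> r" "A1_finite D (fs 0)"
    and "\<forall>j<n. dga_step star t b \<mu> D (fs j) (fs (Suc j))"
  shows "F (fs n) \<le> r * (A1norm D (fs 0) + (\<Sum>j<n. norm (fs j - fs (Suc j))))"
  using assms(6)
proof (induction n)
  case 0
  then show ?case
    using functional_le_A1norm[OF assms(2-5)] by simp
next
  case (Suc n)
  have "F (fs (Suc n)) \<le> F (fs n) + r * norm (fs n - fs (Suc n))"
    using Suc.prems assms(1-3) by (intro dga_step_functional_increment) (auto simp: bounded_linear.linear)
  then show ?case
    using Suc by (simp add: algebra_simps)
qed

lemma dga_residual_le_budget:
  assumes "dictionary D" "D \<noteq> {}" "A1_finite D (fs 0)"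
    and "\<forall>j<n. dga_step star t b \<mu> D (fs j) (fs (Suc j))" and F: "norming_functional (fs n) F"
  shows "norm (fs n) \<le> r_D D F * (A1norm D (fs 0) + (\<Sum>j<n. norm (fs j - fs (Suc j))))"
proof -
  have "\<forall>g\<in>D. F g \<le> r_D D F" "0 \<le> r_D D F"
    using r_D_upper[OF F \<open>dictionary D\<close>] r_D_nonneg[OF F assms(1,2)] by auto
  from dga_residual_functional_le[OF \<open>dictionary D\<close> norming_functionalD(1)[OF F] this assms(3,4)]
  show ?thesis
    using norming_functionalD(2)[OF F] by simp
qed

lemma dga_approx_error_bound:
  fixes f G :: "'a::real_normed_vector"
  assumes smooth: "\<forall>u\<ge>0. modulus_of_smoothness u TYPE('a) \<le> ereal (\<gamma> * u powr q)"
    and "0 < \<gamma>" "1 < q" "0 < t" "t \<le> 1" "0 < b" "b \<le> 1"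
    and "dictionary D" "f \<noteq> 0" and A1_f: "A1_finite D f"
    and approx: "dga_approx star t b (\<lambda>u. \<gamma> * u powr q) D f m G"
    and alpha: "0 < \<alpha>" "\<alpha> \<le> t * (1 - b) / (1 + t * (1 - b))"
  shows "norm (f - G) \<le> norm f powr (1 - \<alpha>) * A1norm D f powr \<alpha>
           * (1 + real m * ((1 - b) * (b / (2 * \<gamma>)) powr (1 / (q - 1)))
                 * t powr (q / (q - 1))) powr (- \<alpha> / (q / (q - 1)))"
proof -
  obtain fs where "fs 0 = f" and steps: "\<forall>i<m. dga_step star t b (\<lambda>u. \<gamma> * u powr q) D (fs i) (fs (Suc i))"
    and "G = f - fs m"
    using approx unfolding dga_approx_def by auto
  define \<kappa> p C where "\<kappa> = t * (1 - b)" and "p = q / (q - 1)"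
    and "C = (1 - b) * (b / (2 * \<gamma>)) powr (1 / (q - 1)) * t powr p"
  define A a c where "A = A1norm D f" and "a = (\<lambda>n. norm (fs n))"
    and "c = (\<lambda>n. norm (fs n - fs (Suc n)))"
  define B where "B = (\<lambda>n. A + (\<Sum>j<n. c j))"
  have "0 \<le> \<kappa>" "\<kappa> \<le> 1" "1 \<le> p" "0 \<le> C"
    using assms by (auto simp: \<kappa>_def p_def C_def mult_le_one)
  have "0 < a 0" "a 0 \<le> A"
    using assms \<open>fs 0 = f\<close> norm_le_A1norm by (auto simp: a_def A_def)
  have "A \<le> B n" for n
    by (simp add: B_def c_def sum_nonneg)
  have "D \<noteq> {}"
    using dictionary_nonempty assms by blast
  have budget: "a n \<le> r_D D F * B n" if "n < m" "norming_functional (fs n) F" for n F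
  proof -
    have "A1_finite D (fs 0)" "\<forall>j<n. dga_step star t b (\<lambda>u. \<gamma> * u powr q) D (fs j) (fs (Suc j))"
      using A1_f \<open>fs 0 = f\<close> steps that(1) by simp_all
    from dga_residual_le_budget[OF \<open>dictionary D\<close> \<open>D \<noteq> {}\<close> this that(2)] show ?thesis
      using \<open>fs 0 = f\<close> by (simp add: a_def B_def A_def c_def)
  qed
  have decay: "a (Suc n) \<le> a n * (1 - \<kappa> * c n / B n) \<and>
    a (Suc n) \<le> a n * (1 - C * (a n / B n) powr p)" if "n < m" for n
    using dga_power_step_decay[OF smooth \<open>0 < \<gamma>\<close> \<open>1 < q\<close> \<open>0 < t\<close> \<open>0 < b\<close> \<open>b \<le> 1\<close>
        \<open>dictionary D\<close> steps[rule_format, OF that], of "B n"]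
      budget[OF that] \<open>A \<le> B n\<close> \<open>0 < a 0\<close> \<open>a 0 \<le> A\<close>
    by (auto simp: a_def c_def \<kappa>_def C_def p_def)
  have "A \<le> B m \<and> a m * B m powr \<kappa> \<le> a 0 * A powr \<kappa>
      \<and> (a m / B m) powr p * ((A / a 0) powr p + m * C) \<le> 1"
  proof (rule residual_recursion_invariants[OF \<open>0 \<le> \<kappa>\<close> \<open>\<kappa> \<le> 1\<close> \<open>0 \<le> C\<close> \<open>1 \<le> p\<close>
        \<open>0 < a 0\<close> \<open>a 0 \<le> A\<close> _ _ _ _ decay[THEN conjunct1] decay[THEN conjunct2]])
    show "B (Suc n) = B n + c n" for n
      by (simp add: B_def)
  qed (auto simp: a_def B_def c_def)
  then have "a m \<le> a 0 powr (1 - \<alpha>) * A powr \<alpha> * (1 + m * C) powr (- \<alpha> / p)"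
    using \<open>0 < a 0\<close> \<open>a 0 \<le> A\<close> \<open>0 \<le> \<kappa>\<close> \<open>0 \<le> C\<close> \<open>1 \<le> p\<close> alpha
    by (intro residual_interpolation[where B = "B m" and \<kappa> = \<kappa>]) (auto simp: a_def \<kappa>_def)
  then show ?thesis
    using \<open>fs 0 = f\<close> \<open>G = f - fs m\<close> by (simp add: a_def A_def C_def p_def mult_ac)
qed

lemma dga_gamma_le:
  fixes \<gamma> q t b \<alpha> :: real
  assumes "\<forall>u\<ge>0. modulus_of_smoothness u TYPE('a::real_normed_vector) \<le> ereal (\<gamma> * u powr q)"
    and "0 < \<gamma>" "1 < q" "0 < t" "t \<le> 1" "0 < b" "b \<le> 1"
    and "0 < \<alpha>" "\<alpha> \<le> t * (1 - b) / (1 + t * (1 - b))"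
  shows "dga_gamma star t b (\<lambda>u. \<gamma> * u powr q) \<alpha> m TYPE('a)
           \<le> ereal ((1 + real m * ((1 - b) * (b / (2 * \<gamma>)) powr (1 / (q - 1)))
                       * t powr (q / (q - 1))) powr (- \<alpha> / (q / (q - 1))))"
  unfolding dga_gamma_def
proof (rule SUP_least, clarify)
  fix D and f G :: 'a
  assume approx: "dictionary D" "f \<noteq> 0" "A1_finite D f" "dga_approx star t b (\<lambda>u. \<gamma> * u powr q) D f m G"
  have "0 < A1norm D f"
    using approx norm_le_A1norm[of D f] by (meson less_le_trans zero_less_norm_iff)
  then show "ereal (norm (f - G) / (norm f powr (1 - \<alpha>) * A1norm D f powr \<alpha>))
      \<le> ereal ((1 + real m * ((1 - b) * (b / (2 * \<gamma>)) powr (1 / (q - 1)))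
                       * t powr (q / (q - 1))) powr (- \<alpha> / (q / (q - 1))))"
    using dga_approx_error_bound[OF assms(1-7) approx assms(8,9)] approx(2)
    by (simp add: pos_divide_le_eq mult_ac)
qed

theorem theorem3p2:
  fixes \<gamma> q t b \<alpha> :: real and m :: nat
  assumes "\<gamma> > 0" and "1 < q" and "q \<le> 2"
    and "\<forall>u\<ge>0. modulus_of_smoothness u TYPE('a::banach) \<le> ereal (\<gamma> * u powr q)"
    and "0 < t" and "t \<le> 1" and "0 < b" and "b \<le> 1"
    and "1 \<le> m" and "0 < \<alpha>" and "\<alpha> \<le> 1"
    and "\<alpha> \<le> t * (1 - b) / (1 + t * (1 - b))"
  shows "dga_gamma False t b (\<lambda>u. \<gamma> * u powr q) \<alpha> m TYPE('a)
           \<le> ereal ((1 + real m * ((1 - b) * (b / (2 * \<gamma>)) powr (1 / (q - 1)))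
                       * t powr (q / (q - 1))) powr (- \<alpha> / (q / (q - 1))))
       \<and> dga_gamma True t b (\<lambda>u. \<gamma> * u powr q) \<alpha> m TYPE('a)
           \<le> ereal ((1 + real m * ((1 - b) * (b / (2 * \<gamma>)) powr (1 / (q - 1)))
                       * t powr (q / (q - 1))) powr (- \<alpha> / (q / (q - 1))))"
  using dga_gamma_le[OF assms(4,1,2,5-8,10,12)] by blast

end
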